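(* Let $k,t\ge1$ and $r\ge1$ be integers and let $G$ be the $(k,t)$-split graph with $r$ parts. If $r=1$ and $t\ge2$, then $a(G)=\kappa(G)$. If $r\ge2$, then $a(G)\ne\kappa(G)$.
   Context: For integers $k,t,r\ge1$, the $(k,t)$-split graph with $r$ parts is the graph whose vertex set is the disjoint union $S_1\cup\dots\cup S_r\cup A_1\cup\dots\cup A_r$ with $|S_i|=k$ and $|A_i|=t$, where $S_1\cup\dots\cup S_r$ is a clique, $A_1\cup\dots\cup A_r$ is an independent set, and each vertex of $A_i$ is adjacent exactly to the vertices of $S_i$. The Laplacian matrix is $L(G)=D(G)-A(G)$; $a(G)$, the algebraic connectivity, is its second smallest eigenvalue (with multiplicity). $\kappa(G)$ is the vertex connectivity of $G$ (minimum size of a vertex set whose removal disconnects $G$). *)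

theory Defs
  imports "Jordan_Normal_Form.Char_Poly" "HOL-Library.Multiset"
begin

text \<open>Graphs on the vertex set {0..<n}, given by a symmetric irreflexive adjacency relation.\<close>

definition degree :: "nat \<Rightarrow> (nat \<Rightarrow> nat \<Rightarrow> bool) \<Rightarrow> nat \<Rightarrow> nat" where
  "degree n adj v = card {w. w < n \<and> adj v w}"

definition laplacian :: "nat \<Rightarrow> (nat \<Rightarrow> nat \<Rightarrow> bool) \<Rightarrow> real mat" where
  "laplacian n adj = mat n n (\<lambda>(i,j). if i = j then real (degree n adj i)
                                        else if adj i j then -1 else 0)"

definition laplacian_eigenvalues :: "nat \<Rightarrow> (nat \<Rightarrow> nat \<Rightarrow> bool) \<Rightarrow> real list" where
  "laplacian_eigenvalues n adj = sorted_list_of_multiset (proots (char_poly (laplacian n adj)))"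

definition algebraic_connectivity :: "nat \<Rightarrow> (nat \<Rightarrow> nat \<Rightarrow> bool) \<Rightarrow> real" where
  "algebraic_connectivity n adj = laplacian_eigenvalues n adj ! 1"

definition connected_on :: "nat set \<Rightarrow> (nat \<Rightarrow> nat \<Rightarrow> bool) \<Rightarrow> bool" where
  "connected_on W adj \<longleftrightarrow>
     (\<forall>u\<in>W. \<forall>v\<in>W. (\<lambda>x y. x \<in> W \<and> y \<in> W \<and> adj x y)\<^sup>*\<^sup>* u v)"

definition is_vertex_cut :: "nat \<Rightarrow> (nat \<Rightarrow> nat \<Rightarrow> bool) \<Rightarrow> nat set \<Rightarrow> bool" where
  "is_vertex_cut n adj X \<longleftrightarrow> X \<subseteq> {0..<n} \<and> \<not> connected_on ({0..<n} - X) adj"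

text \<open>Vertex connectivity (convention n-1 for graphs without a vertex cut, i.e. complete graphs).\<close>
definition vertex_connectivity :: "nat \<Rightarrow> (nat \<Rightarrow> nat \<Rightarrow> bool) \<Rightarrow> nat" where
  "vertex_connectivity n adj =
     (if \<exists>X. is_vertex_cut n adj X then Min {card X | X. is_vertex_cut n adj X} else n - 1)"

text \<open>Vertices 0..<r*(k+t):
  S_i = {i*k ..< (i+1)*k} for i<r (together a clique, vertices < r*k),
  A_i = {r*k + i*t ..< r*k + (i+1)*t} (independent), each vertex of A_i adjacent exactly to S_i.\<close>
definition split_n :: "nat \<Rightarrow> nat \<Rightarrow> nat \<Rightarrow> nat" where
  "split_n k t r = r * (k + t)"

definition split_adj :: "nat \<Rightarrow> nat \<Rightarrow> nat \<Rightarrow> nat \<Rightarrow> nat \<Rightarrow> bool" where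
  "split_adj k t r u v \<longleftrightarrow> u < r*(k+t) \<and> v < r*(k+t) \<and> u \<noteq> v \<and>
     ((u < r*k \<and> v < r*k) \<or>
      (u < r*k \<and> r*k \<le> v \<and> u div k = (v - r*k) div t) \<or>
      (v < r*k \<and> r*k \<le> u \<and> v div k = (u - r*k) div t))"

end

theory Submission imports Defs begin

text \<open>Deleting \<open>S\<^sub>1\<close> isolates the vertices of \<open>A\<^sub>1\<close>, whereas after fewer than \<open>k\<close> deletions
  every surviving vertex of \<open>A\<^sub>i\<close> keeps a neighbour in \<open>S\<^sub>i\<close> and the surviving clique vertices stay
  pairwise adjacent; hence \<open>\<kappa>(G) = k\<close> in both cases.

  For \<open>r = 1\<close> a Laplacian eigenvector is constant on \<open>S\<^sub>1\<close> and on \<open>A\<^sub>1\<close> unless its eigenvalue is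
  \<open>k\<close> or \<open>k + t\<close>, which forces the spectrum into \<open>{0, k, k + t}\<close>; \<open>k\<close> occurs because \<open>t \<ge> 2\<close>,
  and \<open>0\<close> is a simple root of the characteristic polynomial, so \<open>a(G) = k\<close>.

  For \<open>r \<ge> 2\<close> a vector that is constant on each \<open>S\<^sub>i\<close> and \<open>A\<^sub>i\<close>, supported on two parts with
  opposite signs, is an eigenvector as soon as its eigenvalue \<open>\<mu>\<close> solves
  \<open>\<mu>\<^sup>2 - (rk + t + k) \<mu> + rk\<^sup>2 = 0\<close>. This quadratic is positive at \<open>0\<close> and negative at \<open>k\<close>,
  so it has a root \<open>0 < \<mu> < k\<close>, and \<open>a(G) \<le> \<mu> < k\<close>.\<close>

lemma div_eq_iff_bounds: "(t::nat) > 0 \<Longrightarrow> x div t = p \<longleftrightarrow> p*t \<le> x \<and> x < p*t + t"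
  by (metis add.commute div_nat_eqI div_times_less_eq_dividend
    dividend_less_div_times mult.commute mult_Suc)

lemma block_end_le: "(k::nat) > 0 \<Longrightarrow> u < r*k \<Longrightarrow> (u div k)*t + t \<le> r*t"
proof -
  assume "k > 0" "u < r*k"
  then have "Suc (u div k) \<le> r" by (simp add: Suc_le_eq less_mult_imp_div_less)
  then have "Suc (u div k) * t \<le> r * t" by (rule mult_le_mono1)
  then show ?thesis by simp
qed

lemma split_adj_sym: "split_adj k t r u v = split_adj k t r v u"
  unfolding split_adj_def by auto

lemma split_adj_irrefl: "\<not> split_adj k t r u u"
  by (simp add: split_adj_def)

lemma split_neighbours_clique:
  assumes k: "k > 0" and t: "t > 0" and u: "u < r*k"
  shows "{j. j < r*(k+t) \<and> split_adj k t r u j} =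
     ({0..<r*k} - {u}) \<union> {r*k + (u div k)*t ..< r*k + (u div k)*t + t}"
proof (rule Set.set_eqI, rule iffI)
  fix j assume "j \<in> {j. j < r*(k+t) \<and> split_adj k t r u j}"
  then have j: "u \<noteq> j" and c: "j < r*k \<or> (r*k \<le> j \<and> u div k = (j - r*k) div t)"
    using u unfolding split_adj_def by auto
  show "j \<in> ({0..<r*k} - {u}) \<union> {r*k + (u div k)*t ..< r*k + (u div k)*t + t}"
  proof (cases "j < r*k")
    case True then show ?thesis using j by auto
  next
    case False
    then have "r*k \<le> j" "(u div k)*t \<le> j - r*k \<and> j - r*k < (u div k)*t + t"
      using c div_eq_iff_bounds[OF t, of "j - r*k" "u div k"] by auto
    then show ?thesis by auto
  qed
next
  fix j assume j: "j \<in> ({0..<r*k} - {u}) \<union> {r*k + (u div k)*t ..< r*k + (u div k)*t + t}"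
  show "j \<in> {j. j < r*(k+t) \<and> split_adj k t r u j}"
  proof (cases "j < r*k")
    case True
    then show ?thesis using j u unfolding split_adj_def by (auto simp: algebra_simps)
  next
    case False
    then have j2: "r*k + (u div k)*t \<le> j" "j < r*k + (u div k)*t + t" using j by auto
    have jn: "j < r*(k+t)" using j2 block_end_le[OF k u, of t] by (simp add: algebra_simps)
    have "(u div k)*t \<le> j - r*k" "j - r*k < (u div k)*t + t" using j2 by arith+
    then have "(j - r*k) div t = u div k" using div_eq_iff_bounds[OF t] by simp
    then show ?thesis using jn False u unfolding split_adj_def by auto
  qed
qed

lemma split_neighbours_independent:
  assumes k: "k > 0" and t: "t > 0" and u1: "r*k \<le> u" and u2: "u < r*(k+t)"
  shows "{j. j < r*(k+t) \<and> split_adj k t r u j} =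
     {((u - r*k) div t)*k ..< ((u - r*k) div t)*k + k}"
proof -
  have "u - r*k < r*t" using u1 u2 by (simp add: algebra_simps)
  then have block: "((u - r*k) div t)*k + k \<le> r*k" using block_end_le[OF t] by simp
  show ?thesis
  proof (rule Set.set_eqI, rule iffI)
    fix j assume "j \<in> {j. j < r*(k+t) \<and> split_adj k t r u j}"
    then have "j < r*k" "j div k = (u - r*k) div t"
      using u1 unfolding split_adj_def by auto
    then show "j \<in> {((u - r*k) div t)*k ..< ((u - r*k) div t)*k + k}"
      using div_eq_iff_bounds[OF k, of j "(u - r*k) div t"] by simp
  next
    fix j assume j: "j \<in> {((u - r*k) div t)*k ..< ((u - r*k) div t)*k + k}"
    then have "j < r*k" "j div k = (u - r*k) div t"
      using block div_eq_iff_bounds[OF k, of j "(u - r*k) div t"] by auto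
    then show "j \<in> {j. j < r*(k+t) \<and> split_adj k t r u j}"
      using u1 u2 unfolding split_adj_def by (auto simp: algebra_simps)
  qed
qed

lemma split_degree_clique:
  assumes k: "k > 0" and t: "t > 0" and u: "u < r*k"
  shows "degree (r*(k+t)) (split_adj k t r) u = r*k - 1 + t"
proof -
  have "card (({0..<r*k} - {u}) \<union> {r*k + (u div k)*t ..< r*k + (u div k)*t + t})
      = card ({0..<r*k} - {u}) + card {r*k + (u div k)*t ..< r*k + (u div k)*t + t}"
    by (rule card_Un_disjoint) auto
  also have "\<dots> = r*k - 1 + t" using u by simp
  finally show ?thesis unfolding degree_def split_neighbours_clique[OF k t u] .
qed

lemma split_degree_independent:
  assumes k: "k > 0" and t: "t > 0" and u1: "r*k \<le> u" and u2: "u < r*(k+t)"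
  shows "degree (r*(k+t)) (split_adj k t r) u = k"
  unfolding degree_def split_neighbours_independent[OF k t u1 u2] by simp

section \<open>Vertex connectivity\<close>

lemma rtranclp_from_isolated:
  assumes "R\<^sup>*\<^sup>* u v" and "\<And>y. \<not> R u y"
  shows "v = u"
  using assms by (induction rule: converse_rtranclp_induct) auto

lemma split_first_clique_part_is_cut:
  assumes k: "k > 0" and t: "t > 0" and c: "(r = 1 \<and> t \<ge> 2) \<or> r \<ge> 2"
  shows "is_vertex_cut (r*(k+t)) (split_adj k t r) {0..<k}"
proof -
  let ?n = "r*(k+t)" and ?W = "{0..<r*(k+t)} - {0..<k}"
  let ?R = "\<lambda>x y. x \<in> ?W \<and> y \<in> ?W \<and> split_adj k t r x y"
  \<comment> \<open>\<open>r*k \<in> A\<^sub>1\<close> becomes isolated; \<open>v\<close> is another survivor, in \<open>A\<^sub>1\<close> if \<open>r = 1\<close> and in \<open>S\<^sub>2\<close> otherwise\<close>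
  define v where "v = (if r = 1 then r*k + 1 else k)"
  have rk: "k \<le> r*k" and un: "r*k < ?n" using c t by (auto simp: algebra_simps)
  have uW: "r*k \<in> ?W" using rk un by auto
  have vW: "v \<in> ?W"
  proof (cases "r = 1")
    case True then show ?thesis using c unfolding v_def by auto
  next
    case False
    then have "k < r*k" using c k by simp
    then have "k < ?n" using un by linarith
    then show ?thesis using False unfolding v_def by auto
  qed
  have "\<not> ?R (r*k) y" for y
  proof
    assume "?R (r*k) y"
    then have "y \<in> {j. j < ?n \<and> split_adj k t r (r*k) j}" "y \<notin> {0..<k}" by auto
    then show False unfolding split_neighbours_independent[OF k t order_refl un] by simp
  qed
  moreover have "v \<noteq> r*k" using k c unfolding v_def by auto
  ultimately have "\<not> ?R\<^sup>*\<^sup>* (r*k) v" using rtranclp_from_isolated[of ?R "r*k" v] by blast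
  then have "\<not> connected_on ?W (split_adj k t r)" unfolding connected_on_def using uW vW by blast
  moreover have "{0..<k} \<subseteq> {0..<?n}" using less_imp_le_nat[OF le_less_trans[OF rk un]] by auto
  ultimately show ?thesis unfolding is_vertex_cut_def by blast
qed

text \<open>Each surviving independent vertex still sees a surviving vertex of its clique part, and the
  surviving clique vertices are pairwise adjacent.\<close>
lemma split_connected_after_small_deletion:
  assumes k: "k > 0" and t: "t > 0" and X: "X \<subseteq> {0..<r*(k+t)}" and cX: "card X < k"
  shows "connected_on ({0..<r*(k+t)} - X) (split_adj k t r)"
proof -
  let ?n = "r*(k+t)" and ?W = "{0..<r*(k+t)} - X"
  let ?R = "\<lambda>x y. x \<in> ?W \<and> y \<in> ?W \<and> split_adj k t r x y"
  have hub: "\<exists>s. s \<in> ?W \<and> s < r*k \<and> ?R\<^sup>*\<^sup>* u s \<and> ?R\<^sup>*\<^sup>* s u" if u: "u \<in> ?W" for u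
  proof (cases "u < r*k")
    case True then show ?thesis using u by blast
  next
    case False
    let ?Sp = "{((u - r*k) div t)*k ..< ((u - r*k) div t)*k + k}"
    have "\<not> ?Sp \<subseteq> X"
      using card_mono[OF finite_subset[OF X finite_atLeastLessThan], of ?Sp] cX by auto
    then obtain s where s: "s \<in> ?Sp" "s \<notin> X" by blast
    have "s \<in> {j. j < ?n \<and> split_adj k t r u j}"
      using s(1) split_neighbours_independent[OF k t _ _, where u=u] False u by auto
    then have "s < ?n" and a: "split_adj k t r u s" by auto
    then have "s \<in> ?W" "s < r*k" using s False unfolding split_adj_def by auto
    moreover have "?R u s" "?R s u" using u \<open>s \<in> ?W\<close> a split_adj_sym by blast+
    ultimately show ?thesis by blast
  qed
  show ?thesis unfolding connected_on_def
  proof (intro ballI)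
    fix u v assume u: "u \<in> ?W" and v: "v \<in> ?W"
    obtain su where su: "su \<in> ?W" "su < r*k" "?R\<^sup>*\<^sup>* u su" using hub[OF u] by blast
    obtain sv where sv: "sv \<in> ?W" "sv < r*k" "?R\<^sup>*\<^sup>* sv v" using hub[OF v] by blast
    have "?R\<^sup>*\<^sup>* su sv"
    proof (cases "su = sv")
      case False
      then have "?R su sv" using su sv unfolding split_adj_def by auto
      then show ?thesis by blast
    qed simp
    then show "?R\<^sup>*\<^sup>* u v" using su(3) sv(3) by (meson rtranclp_trans)
  qed
qed

lemma vertex_connectivity_split:
  assumes k: "k > 0" and t: "t > 0" and c: "(r = 1 \<and> t \<ge> 2) \<or> r \<ge> 2"
  shows "vertex_connectivity (r*(k+t)) (split_adj k t r) = k"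
proof -
  let ?C = "{card X | X. is_vertex_cut (r*(k+t)) (split_adj k t r) X}"
  have cut: "is_vertex_cut (r*(k+t)) (split_adj k t r) {0..<k}"
    by (rule split_first_clique_part_is_cut[OF k t c])
  then have kin: "k \<in> ?C" by force
  have lb: "k \<le> y" if "y \<in> ?C" for y
  proof -
    obtain X where X: "y = card X" "is_vertex_cut (r*(k+t)) (split_adj k t r) X"
      using \<open>y \<in> ?C\<close> by blast
    then show ?thesis
      using split_connected_after_small_deletion[OF k t, of X] unfolding is_vertex_cut_def
      by (meson not_le)
  qed
  have "?C \<subseteq> {..r*(k+t)}"
  proof
    fix y assume "y \<in> ?C"
    then obtain X where "y = card X" "X \<subseteq> {0..<r*(k+t)}" unfolding is_vertex_cut_def by blast
    then show "y \<in> {..r*(k+t)}" using card_mono[of "{0..<r*(k+t)}" X] by simp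
  qed
  then have "finite ?C" using finite_subset by blast
  then have "Min ?C = k" using Min_eqI lb kin by blast
  then show ?thesis unfolding vertex_connectivity_def using cut by auto
qed

lemma laplacian_carrier: "laplacian n adj \<in> carrier_mat n n"
  by (simp add: laplacian_def)

lemma laplacian_row_mult:
  fixes x :: "nat \<Rightarrow> real"
  assumes i: "i < n" and irr: "\<not> adj i i"
  shows "(\<Sum>j<n. laplacian n adj $$ (i,j) * x j)
     = real (degree n adj i) * x i - (\<Sum>j\<in>{j. j<n \<and> adj i j}. x j)"
proof -
  have "(\<Sum>j<n. laplacian n adj $$ (i,j) * x j)
     = (\<Sum>j<n. (if j = i then real (degree n adj i) * x i else 0) + (if adj i j then - x j else 0))"
    by (rule sum.cong) (use i irr in \<open>auto simp: laplacian_def\<close>)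
  also have "\<dots> = real (degree n adj i) * x i + (\<Sum>j<n. if adj i j then - x j else 0)"
    using i by (simp add: sum.distrib)
  also have "(\<Sum>j<n. if adj i j then - x j else 0) = - (\<Sum>j\<in>{j. j<n \<and> adj i j}. x j)"
    by (simp add: sum.If_cases sum_negf Collect_conj_eq lessThan_def Int_commute)
  finally show ?thesis by simp
qed

lemma laplacian_row_sum:
  assumes "i < n" and "\<not> adj i i"
  shows "(\<Sum>j<n. laplacian n adj $$ (i,j)) = 0"
  using laplacian_row_mult[of i n adj "\<lambda>_. 1"] assms by (simp add: degree_def)

lemma split_laplacian_clique_row:
  fixes x :: "nat \<Rightarrow> real"
  assumes k: "k > 0" and t: "t > 0" and u: "u < r*k"
  shows "(\<Sum>j<r*(k+t). laplacian (r*(k+t)) (split_adj k t r) $$ (u,j) * x j)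
     = (real r * real k + real t) * x u - (\<Sum>j<r*k. x j)
       - (\<Sum>j\<in>{r*k + (u div k)*t ..< r*k + (u div k)*t + t}. x j)"
proof -
  have un: "u < r*(k+t)" using u by (simp add: algebra_simps)
  have "(\<Sum>j\<in>{j. j < r*(k+t) \<and> split_adj k t r u j}. x j)
      = (\<Sum>j\<in>{0..<r*k} - {u}. x j) + (\<Sum>j\<in>{r*k + (u div k)*t ..< r*k + (u div k)*t + t}. x j)"
    unfolding split_neighbours_clique[OF k t u] by (rule sum.union_disjoint) auto
  also have "(\<Sum>j\<in>{0..<r*k} - {u}. x j) = (\<Sum>j<r*k. x j) - x u"
    using u by (simp add: sum_diff1 atLeast0LessThan)
  finally have nbrs: "(\<Sum>j\<in>{j. j < r*(k+t) \<and> split_adj k t r u j}. x j) =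
     (\<Sum>j<r*k. x j) - x u + (\<Sum>j\<in>{r*k + (u div k)*t ..< r*k + (u div k)*t + t}. x j)" .
  have "1 \<le> r*k" using u by linarith
  then have deg: "real (r*k - 1 + t) = real r * real k - 1 + real t"
    by (simp only: of_nat_add of_nat_diff of_nat_mult)
  show ?thesis
    unfolding laplacian_row_mult[OF un split_adj_irrefl] split_degree_clique[OF k t u] nbrs deg
    by (simp add: algebra_simps)
qed

lemma split_laplacian_independent_row:
  fixes x :: "nat \<Rightarrow> real"
  assumes k: "k > 0" and t: "t > 0" and u1: "r*k \<le> u" and u2: "u < r*(k+t)"
  shows "(\<Sum>j<r*(k+t). laplacian (r*(k+t)) (split_adj k t r) $$ (u,j) * x j)
     = real k * x u - (\<Sum>j\<in>{((u - r*k) div t)*k ..< ((u - r*k) div t)*k + k}. x j)"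
  unfolding laplacian_row_mult[OF u2 split_adj_irrefl] split_degree_independent[OF k t u1 u2]
    split_neighbours_independent[OF k t u1 u2] by simp

lemma mult_mat_vec_nth:
  assumes "A \<in> carrier_mat n n" "dim_vec v = n" "i < n"
  shows "(A *\<^sub>v v) $ i = (\<Sum>j<n. A $$ (i,j) * v $ j)"
  using assms by (auto simp: scalar_prod_def atLeast0LessThan intro!: sum.cong)

lemma eigenvalueI_fun:
  fixes x :: "nat \<Rightarrow> 'a::field"
  assumes A: "A \<in> carrier_mat n n" and i0: "i0 < n" "x i0 \<noteq> 0"
    and eq: "\<And>i. i < n \<Longrightarrow> (\<Sum>j<n. A $$ (i,j) * x j) = \<mu> * x i"
  shows "eigenvalue A \<mu>"
proof -
  have "eigenvector A (vec n x) \<mu>" unfolding eigenvector_def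
  proof (intro conjI)
    show "vec n x \<in> carrier_vec (dim_row A)" using A by simp
    show "vec n x \<noteq> 0\<^sub>v (dim_row A)"
      using i0 A by (metis carrier_matD(1) index_vec index_zero_vec(1))
    show "A *\<^sub>v vec n x = \<mu> \<cdot>\<^sub>v vec n x"
    proof (rule eq_vecI)
      fix i assume "i < dim_vec (\<mu> \<cdot>\<^sub>v vec n x)"
      then have i: "i < n" by simp
      have "(A *\<^sub>v vec n x) $ i = (\<Sum>j<n. A $$ (i,j) * x j)"
        by (simp add: mult_mat_vec_nth[OF A _ i])
      then show "(A *\<^sub>v vec n x) $ i = (\<mu> \<cdot>\<^sub>v vec n x) $ i" using eq[OF i] i by simp
    qed (use A in simp)
  qed
  then show ?thesis unfolding eigenvalue_def by blast
qed

lemma eigenvalueE_fun: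
  fixes A :: "'a::field mat"
  assumes A: "A \<in> carrier_mat n n" and "eigenvalue A \<mu>"
  obtains i0 x where "i0 < n" "x i0 \<noteq> 0" "\<And>i. i < n \<Longrightarrow> (\<Sum>j<n. A $$ (i,j) * x j) = \<mu> * x i"
proof -
  obtain v where v: "v \<in> carrier_vec n" "v \<noteq> 0\<^sub>v n" "A *\<^sub>v v = \<mu> \<cdot>\<^sub>v v"
    using assms unfolding eigenvalue_def eigenvector_def by auto
  then have dv: "dim_vec v = n" by simp
  obtain i0 where "i0 < n" "v $ i0 \<noteq> 0"
    using v(2) dv by (metis eq_vecI index_zero_vec)
  moreover have "(\<Sum>j<n. A $$ (i,j) * v $ j) = \<mu> * v $ i" if "i < n" for i
    using v(3) that dv mult_mat_vec_nth[OF A dv that] by (metis index_smult_vec(1))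
  ultimately show ?thesis using that by blast
qed

lemma laplacian_eigenvalues_set:
  "set (laplacian_eigenvalues n adj) = {\<mu>. eigenvalue (laplacian n adj) \<mu>}"
proof -
  have "char_poly (laplacian n adj) \<noteq> 0"
    using degree_monic_char_poly[OF laplacian_carrier[of n adj]] by auto
  then show ?thesis unfolding laplacian_eigenvalues_def set_sorted_list_of_multiset
    using eigenvalue_root_char_poly[OF laplacian_carrier] by simp
qed

lemma laplacian_eigenvalue_zero:
  assumes "0 < n" and "\<And>v. \<not> adj v v"
  shows "eigenvalue (laplacian n adj) 0"
  by (rule eigenvalueI_fun[OF laplacian_carrier, of 0 _ "\<lambda>_. 1"])
    (use assms laplacian_row_sum in auto)

section \<open>Simplicity of the eigenvalue 0\<close>

text \<open>With \<open>P\<close> the identity matrix whose first column is replaced by ones, a matrix \<open>L\<close> with zero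
  row sums satisfies \<open>L P = P (deflation_mat n L)\<close>, and the first column of the deflated matrix
  vanishes. Hence \<open>char_poly L = x \<cdot> char_poly M\<close> for its minor \<open>M\<close>, and \<open>0\<close> is a simple root
  exactly when \<open>M\<close> is nonsingular.\<close>

definition ones_col0_mat :: "nat \<Rightarrow> 'a::ring_1 mat" where
  "ones_col0_mat n = mat n n (\<lambda>(i,j). if j = 0 \<or> i = j then 1 else 0)"

definition ones_col0_inv_mat :: "nat \<Rightarrow> 'a::ring_1 mat" where
  "ones_col0_inv_mat n = mat n n (\<lambda>(i,j). if i = j then 1 else if j = 0 then -1 else 0)"

definition deflation_mat :: "nat \<Rightarrow> 'a::ring_1 mat \<Rightarrow> 'a mat" where
  "deflation_mat n L = mat n n (\<lambda>(i,j). if j = 0 then 0 else L $$ (i,j) - (if i = 0 then 0 else L $$ (0,j)))"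

lemma mult_mat_nth:
  assumes "A \<in> carrier_mat n n" "B \<in> carrier_mat n n" "i < n" "j < n"
  shows "(A * B) $$ (i,j) = (\<Sum>l<n. A $$ (i,l) * B $$ (l,j))"
  using assms by (auto simp: scalar_prod_def atLeast0LessThan intro!: sum.cong)

lemma ones_col0_mat_row_mult:
  fixes G :: "nat \<Rightarrow> 'a::ring_1"
  assumes i: "i < n"
  shows "(\<Sum>l<n. ones_col0_mat n $$ (i,l) * G l) = G 0 + (if i = 0 then 0 else G i)"
proof -
  have "(\<Sum>l<n. ones_col0_mat n $$ (i,l) * G l)
      = (\<Sum>l<n. (if l = 0 then G 0 else 0) + (if i = 0 then 0 else (if l = i then G i else 0)))"
    by (rule sum.cong) (use i in \<open>auto simp: ones_col0_mat_def\<close>)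
  also have "\<dots> = (\<Sum>l<n. if l = 0 then G 0 else 0) + (\<Sum>l<n. if i = 0 then 0 else if l = i then G i else 0)"
    by (rule sum.distrib)
  also have "\<dots> = G 0 + (if i = 0 then 0 else G i)"
    using i by (cases "i = 0") (simp_all add: sum.delta)
  finally show ?thesis .
qed

lemma ones_col0_inv_mat_row_mult:
  fixes G :: "nat \<Rightarrow> 'a::ring_1"
  assumes i: "i < n"
  shows "(\<Sum>l<n. ones_col0_inv_mat n $$ (i,l) * G l) = G i - (if i = 0 then 0 else G 0)"
proof -
  have "(\<Sum>l<n. ones_col0_inv_mat n $$ (i,l) * G l)
      = (\<Sum>l<n. (if l = i then G i else 0) + (if i = 0 then 0 else (if l = 0 then - G 0 else 0)))"
    by (rule sum.cong) (use i in \<open>auto simp: ones_col0_inv_mat_def\<close>)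
  also have "\<dots> = (\<Sum>l<n. if l = i then G i else 0) + (\<Sum>l<n. if i = 0 then 0 else if l = 0 then - G 0 else 0)"
    by (rule sum.distrib)
  also have "\<dots> = G i - (if i = 0 then 0 else G 0)"
    using i by (cases "i = 0") (simp_all add: sum.delta)
  finally show ?thesis .
qed

lemma mult_ones_col0_mat_col:
  fixes G :: "nat \<Rightarrow> 'a::ring_1"
  assumes j: "j < n"
  shows "(\<Sum>l<n. G l * ones_col0_mat n $$ (l,j)) = (if j = 0 then (\<Sum>l<n. G l) else G j)"
proof (cases "j = 0")
  case True
  have "(\<Sum>l<n. G l * ones_col0_mat n $$ (l,j)) = (\<Sum>l<n. G l)"
    by (rule sum.cong) (use j True in \<open>auto simp: ones_col0_mat_def\<close>)
  then show ?thesis using True by simp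
next
  case False
  have "(\<Sum>l<n. G l * ones_col0_mat n $$ (l,j)) = (\<Sum>l<n. if l = j then G j else 0)"
    by (rule sum.cong) (use j False in \<open>auto simp: ones_col0_mat_def\<close>)
  then show ?thesis using False j by (simp add: sum.delta)
qed

lemma ones_col0_mat_carrier: "ones_col0_mat n \<in> carrier_mat n n"
  by (simp add: ones_col0_mat_def)

lemma ones_col0_inv_mat_carrier: "ones_col0_inv_mat n \<in> carrier_mat n n"
  by (simp add: ones_col0_inv_mat_def)

lemma deflation_mat_carrier: "deflation_mat n L \<in> carrier_mat n n"
  by (simp add: deflation_mat_def)

lemma ones_col0_mat_inverse:
  "ones_col0_mat n * ones_col0_inv_mat n = (1\<^sub>m n :: 'a::ring_1 mat)"
  "ones_col0_inv_mat n * ones_col0_mat n = (1\<^sub>m n :: 'a::ring_1 mat)"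
proof -
  show "ones_col0_mat n * ones_col0_inv_mat n = (1\<^sub>m n :: 'a mat)"
  proof (rule eq_matI)
    fix i j assume "i < dim_row (1\<^sub>m n :: 'a mat)" "j < dim_col (1\<^sub>m n :: 'a mat)"
    then have i: "i < n" and j: "j < n" by auto
    show "(ones_col0_mat n * ones_col0_inv_mat n) $$ (i,j) = (1\<^sub>m n :: 'a mat) $$ (i,j)"
      unfolding mult_mat_nth[OF ones_col0_mat_carrier ones_col0_inv_mat_carrier i j]
        ones_col0_mat_row_mult[OF i]
      using i j by (auto simp: ones_col0_inv_mat_def)
  qed (auto simp: ones_col0_mat_def ones_col0_inv_mat_def)
  show "ones_col0_inv_mat n * ones_col0_mat n = (1\<^sub>m n :: 'a mat)"
  proof (rule eq_matI)
    fix i j assume "i < dim_row (1\<^sub>m n :: 'a mat)" "j < dim_col (1\<^sub>m n :: 'a mat)"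
    then have i: "i < n" and j: "j < n" by auto
    have "(\<Sum>l<n. ones_col0_inv_mat n $$ (i,l)) = (\<Sum>l<n. ones_col0_inv_mat n $$ (i,l) * 1)" by simp
    also have "\<dots> = 1 - (if i = 0 then 0 else 1)" by (rule ones_col0_inv_mat_row_mult[OF i])
    finally have "(\<Sum>l<n. ones_col0_inv_mat n $$ (i,l)) = (1::'a) - (if i = 0 then 0 else 1)" .
    then show "(ones_col0_inv_mat n * ones_col0_mat n) $$ (i,j) = (1\<^sub>m n :: 'a mat) $$ (i,j)"
      unfolding mult_mat_nth[OF ones_col0_inv_mat_carrier ones_col0_mat_carrier i j]
        mult_ones_col0_mat_col[OF j]
      using i j by (auto simp: ones_col0_inv_mat_def)
  qed (auto simp: ones_col0_mat_def ones_col0_inv_mat_def)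
qed

lemma mult_ones_col0_mat_deflation:
  fixes L :: "'a::ring_1 mat"
  assumes L: "L \<in> carrier_mat n n" and rs: "\<And>i. i < n \<Longrightarrow> (\<Sum>j<n. L $$ (i,j)) = 0"
  shows "L * ones_col0_mat n = ones_col0_mat n * deflation_mat n L"
proof (rule eq_matI)
  fix i j assume "i < dim_row (ones_col0_mat n * deflation_mat n L)"
    "j < dim_col (ones_col0_mat n * deflation_mat n L)"
  then have i: "i < n" and j: "j < n" by (auto simp: ones_col0_mat_def deflation_mat_def)
  have "(L * ones_col0_mat n) $$ (i,j) = (if j = 0 then 0 else L $$ (i,j))"
    unfolding mult_mat_nth[OF L ones_col0_mat_carrier i j] mult_ones_col0_mat_col[OF j]
    using rs[OF i] by simp
  moreover have "(ones_col0_mat n * deflation_mat n L) $$ (i,j) = (if j = 0 then 0 else L $$ (i,j))"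
    unfolding mult_mat_nth[OF ones_col0_mat_carrier deflation_mat_carrier i j]
      ones_col0_mat_row_mult[OF i]
    using i j by (auto simp: deflation_mat_def)
  ultimately show "(L * ones_col0_mat n) $$ (i,j) = (ones_col0_mat n * deflation_mat n L) $$ (i,j)"
    by simp
qed (use L in \<open>auto simp: ones_col0_mat_def deflation_mat_def\<close>)

lemma char_poly_zero_row_sums:
  fixes L :: "'a::field mat"
  assumes L: "L \<in> carrier_mat n n" and n: "0 < n"
    and rs: "\<And>i. i < n \<Longrightarrow> (\<Sum>j<n. L $$ (i,j)) = 0"
  shows "char_poly L = monom 1 1 * char_poly (mat_delete (deflation_mat n L) 0 0)"
proof -
  let ?P = "ones_col0_mat n :: 'a mat" and ?Q = "ones_col0_inv_mat n :: 'a mat"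
  have "L = L * (?P * ?Q)" using L by (simp add: ones_col0_mat_inverse)
  also have "\<dots> = (L * ?P) * ?Q"
    using assoc_mult_mat[OF L ones_col0_mat_carrier ones_col0_inv_mat_carrier] by simp
  also have "\<dots> = ?P * deflation_mat n L * ?Q" by (simp add: mult_ones_col0_mat_deflation[OF L rs])
  finally have "L = ?P * deflation_mat n L * ?Q" .
  then have "similar_mat L (deflation_mat n L)"
    by (intro similar_matI[OF _ ones_col0_mat_inverse])
      (use L ones_col0_mat_carrier ones_col0_inv_mat_carrier deflation_mat_carrier in auto)
  then have "char_poly L = char_poly (deflation_mat n L)" by (rule char_poly_similar)
  also have "\<dots> = monom 1 1 * char_poly (mat_delete (deflation_mat n L) 0 0)"
    by (rule char_poly_0_column[OF _ deflation_mat_carrier n]) (simp add: deflation_mat_def)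
  finally show ?thesis .
qed

lemma deflation_minor_nth:
  assumes "i < n - 1" and "j < n - 1"
  shows "mat_delete (deflation_mat n L) 0 0 $$ (i,j) = L $$ (Suc i, Suc j) - L $$ (0, Suc j)"
  using assms by (simp add: mat_delete_def deflation_mat_def)

text \<open>A kernel vector \<open>x\<close> of the minor, shifted to \<open>y = (0, x)\<close>, makes all entries of \<open>L y\<close> equal.\<close>
lemma deflation_minor_nonsingular:
  fixes L :: "'a::field mat"
  assumes L: "L \<in> carrier_mat n n"
    and ker: "\<And>y c. y 0 = 0 \<Longrightarrow> (\<And>i. i < n \<Longrightarrow> (\<Sum>j<n. L $$ (i,j) * y j) = c) \<Longrightarrow> \<forall>i<n. y i = 0"
  shows "\<not> eigenvalue (mat_delete (deflation_mat n L) 0 0) 0"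
proof
  let ?M = "mat_delete (deflation_mat n L) 0 0"
  define m where "m = n - 1"
  assume ev: "eigenvalue ?M 0"
  have Mc: "?M \<in> carrier_mat m m"
    unfolding m_def using mat_delete_carrier[OF deflation_mat_carrier] by blast
  obtain i0 x where x0: "i0 < m" "x i0 \<noteq> 0"
    and ker_x: "\<And>i. i < m \<Longrightarrow> (\<Sum>j<m. ?M $$ (i,j) * x j) = 0 * x i"
    by (rule eigenvalueE_fun[OF Mc ev]) blast
  then have nm: "n = Suc m" unfolding m_def by simp
  define y where "y l = (if l = 0 then 0 else x (l - 1))" for l
  define S where "S u = (\<Sum>l<n. L $$ (u,l) * y l)" for u
  have shift: "S u = (\<Sum>j<m. L $$ (u, Suc j) * x j)" for u
    unfolding S_def nm lessThan_atLeast0 sum.atLeast0_lessThan_Suc_shift by (simp add: y_def)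
  have S_const: "S u = S 0" if u: "u < n" for u
  proof (cases u)
    case (Suc i)
    then have i: "i < m" using u nm by simp
    have "0 = (\<Sum>j<m. ?M $$ (i,j) * x j)" using ker_x[OF i] by simp
    also have "\<dots> = (\<Sum>j<m. (L $$ (Suc i, Suc j) - L $$ (0, Suc j)) * x j)"
      by (rule sum.cong) (use i deflation_minor_nth[of i n _ L] in \<open>auto simp: m_def\<close>)
    also have "\<dots> = S (Suc i) - S 0" unfolding shift by (simp add: left_diff_distrib sum_subtractf)
    finally show ?thesis using Suc by simp
  qed simp
  have "\<forall>i<n. y i = 0"
  proof (rule ker)
    show "y 0 = 0" by (simp add: y_def)
    show "(\<Sum>j<n. L $$ (i,j) * y j) = S 0" if "i < n" for i
      using S_const[OF that] unfolding S_def .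
  qed
  then have "y (Suc i0) = 0" using x0(1) nm by simp
  then show False using x0(2) by (simp add: y_def)
qed

lemma order_zero_char_poly_eq_1:
  fixes L :: "'a::field mat"
  assumes L: "L \<in> carrier_mat n n" and n: "0 < n"
    and rs: "\<And>i. i < n \<Longrightarrow> (\<Sum>j<n. L $$ (i,j)) = 0"
    and ker: "\<And>y c. y 0 = 0 \<Longrightarrow> (\<And>i. i < n \<Longrightarrow> (\<Sum>j<n. L $$ (i,j) * y j) = c) \<Longrightarrow> \<forall>i<n. y i = 0"
  shows "order 0 (char_poly L) = 1"
proof -
  let ?M = "mat_delete (deflation_mat n L) 0 0"
  have "?M \<in> carrier_mat (n - 1) (n - 1)" by (rule mat_delete_carrier[OF deflation_mat_carrier])
  then have M0: "poly (char_poly ?M) 0 \<noteq> 0"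
    using deflation_minor_nonsingular[OF L ker] by (simp add: eigenvalue_root_char_poly)
  then have "char_poly ?M \<noteq> 0" by auto
  then have "order 0 (monom 1 1 * char_poly ?M) = order 0 (monom (1::'a) 1) + order 0 (char_poly ?M)"
    by (simp add: order_mult)
  also have "order 0 (monom (1::'a) 1) = 1"
    using order_power_n_n[of 0 1] by (simp add: monom_altdef)
  also have "order 0 (char_poly ?M) = 0" by (rule order_0I[OF M0])
  finally show ?thesis by (simp add: char_poly_zero_row_sums[OF L n rs])
qed

section \<open>An eigenvalue below \<open>k\<close> for at least two parts\<close>

lemma sum_div_blocks:
  fixes h :: "nat \<Rightarrow> real"
  assumes k: "k > 0"
  shows "(\<Sum>j<r*k. h (j div k)) = real k * (\<Sum>p<r. h p)"
proof (induction r)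
  case (Suc r)
  have "{..<Suc r * k} = {..<r*k} \<union> {r*k..<r*k+k}" by auto
  then have "(\<Sum>j<Suc r*k. h (j div k)) = (\<Sum>j<r*k. h (j div k)) + (\<Sum>j\<in>{r*k..<r*k+k}. h (j div k))"
    by (metis finite_atLeastLessThan finite_lessThan ivl_disj_int_one(2) lessThan_atLeast0 sum.union_disjoint)
  also have "(\<Sum>j\<in>{r*k..<r*k+k}. h (j div k)) = (\<Sum>j\<in>{r*k..<r*k+k}. h r)"
  proof (rule sum.cong)
    fix j assume "j \<in> {r*k..<r*k+k}"
    then have "j div k = r" using div_eq_iff_bounds[OF k, of j r] by simp
    then show "h (j div k) = h r" by simp
  qed simp
  finally show ?case using Suc by (simp add: algebra_simps)
qed simp

lemma sum_interval_const:
  fixes x :: "nat \<Rightarrow> real"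
  assumes "\<And>j. j \<in> {a..<a+m} \<Longrightarrow> x j = c"
  shows "(\<Sum>j\<in>{a..<a+m}. x j) = real m * c"
  using assms by simp

text \<open>The vector with value \<open>f p\<close> on \<open>S\<^sub>p\<close> and \<open>g p\<close> on \<open>A\<^sub>p\<close>; the Laplacian preserves this shape.\<close>
definition split_block_vec :: "nat \<Rightarrow> nat \<Rightarrow> nat \<Rightarrow> (nat \<Rightarrow> real) \<Rightarrow> (nat \<Rightarrow> real) \<Rightarrow> nat \<Rightarrow> real" where
  "split_block_vec k t r f g j = (if j < r*k then f (j div k) else g ((j - r*k) div t))"

lemma split_laplacian_block_vec_clique:
  assumes k: "k > 0" and t: "t > 0" and u: "u < r*k"
  shows "(\<Sum>j<r*(k+t). laplacian (r*(k+t)) (split_adj k t r) $$ (u,j) * split_block_vec k t r f g j)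
     = (real r * real k + real t) * f (u div k) - real k * (\<Sum>p<r. f p) - real t * g (u div k)"
proof -
  let ?x = "split_block_vec k t r f g"
  have "(\<Sum>j<r*k. ?x j) = real k * (\<Sum>p<r. f p)"
    using sum_div_blocks[OF k, of f r] by (simp add: split_block_vec_def)
  moreover have "(\<Sum>j\<in>{r*k + (u div k)*t ..< r*k + (u div k)*t + t}. ?x j) = real t * g (u div k)"
  proof (rule sum_interval_const)
    fix j assume j: "j \<in> {r*k + (u div k)*t ..< r*k + (u div k)*t + t}"
    then have "(u div k)*t \<le> j - r*k" "j - r*k < (u div k)*t + t" by auto
    then have "(j - r*k) div t = u div k" using div_eq_iff_bounds[OF t] by simp
    then show "?x j = g (u div k)" using j by (simp add: split_block_vec_def)
  qed
  ultimately show ?thesis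
    unfolding split_laplacian_clique_row[OF k t u] using u by (simp add: split_block_vec_def)
qed

lemma split_laplacian_block_vec_independent:
  assumes k: "k > 0" and t: "t > 0" and u1: "r*k \<le> u" and u2: "u < r*(k+t)"
  shows "(\<Sum>j<r*(k+t). laplacian (r*(k+t)) (split_adj k t r) $$ (u,j) * split_block_vec k t r f g j)
     = real k * g ((u - r*k) div t) - real k * f ((u - r*k) div t)"
proof -
  let ?p = "(u - r*k) div t"
  have "u - r*k < r*t" using u1 u2 by (simp add: algebra_simps)
  then have block: "?p*k + k \<le> r*k" using block_end_le[OF t] by simp
  have "(\<Sum>j\<in>{?p*k ..< ?p*k + k}. split_block_vec k t r f g j) = real k * f ?p"
  proof (rule sum_interval_const)
    fix j assume j: "j \<in> {?p*k ..< ?p*k + k}"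
    then have "j < r*k" "j div k = ?p" using block div_eq_iff_bounds[OF k] by auto
    then show "split_block_vec k t r f g j = f ?p" by (simp add: split_block_vec_def)
  qed
  then show ?thesis
    unfolding split_laplacian_independent_row[OF k t u1 u2] using u1
    by (simp add: split_block_vec_def)
qed

lemma split_quadratic_root_below_k:
  fixes r k t :: real
  assumes "0 < r" "0 < k" "0 < t"
  obtains \<mu> where "0 < \<mu>" "\<mu> < k" "\<mu>\<^sup>2 - (r*k + t + k) * \<mu> + r * k\<^sup>2 = 0"
proof -
  let ?q = "\<lambda>\<mu>. \<mu>\<^sup>2 - (r*k + t + k) * \<mu> + r * k\<^sup>2"
  have "?q k < 0" "0 < ?q 0" using assms by (simp_all add: power2_eq_square algebra_simps)
  moreover have "continuous_on {0..k} ?q" by (intro continuous_intros)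
  ultimately obtain \<mu> where \<mu>: "0 \<le> \<mu>" "\<mu> \<le> k" "?q \<mu> = 0"
    using IVT2'[of ?q k 0 0] assms by auto
  then have "\<mu> \<noteq> 0" "\<mu> \<noteq> k" using \<open>?q k < 0\<close> \<open>0 < ?q 0\<close> by auto
  with \<mu> show ?thesis by (intro that) auto
qed

text \<open>The witness lives on the first two parts with opposite signs, so its clique values sum to
  zero; on each part it takes \<open>k - \<mu>\<close> on \<open>S\<^sub>p\<close> and \<open>k\<close> on \<open>A\<^sub>p\<close>, which is an eigenvector
  exactly when \<open>\<mu>\<close> solves the quadratic above.\<close>
lemma split_laplacian_eigenvalue_below_k:
  assumes k: "k > 0" and t: "t > 0" and r: "r \<ge> 2"
  obtains \<mu> where "0 < \<mu>" "\<mu> < real k" "eigenvalue (laplacian (r*(k+t)) (split_adj k t r)) \<mu>"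
proof -
  obtain \<mu> where \<mu>: "0 < \<mu>" "\<mu> < real k"
    and quad: "\<mu>\<^sup>2 - (real r * real k + real t + real k) * \<mu> + real r * (real k)\<^sup>2 = 0"
    using split_quadratic_root_below_k[of "real r" "real k" "real t"] k t r by auto
  define f :: "nat \<Rightarrow> real" where
    "f p = (if p = 0 then real k - \<mu> else if p = 1 then \<mu> - real k else 0)" for p
  define g :: "nat \<Rightarrow> real" where
    "g p = (if p = 0 then real k else if p = 1 then - real k else 0)" for p
  let ?x = "split_block_vec k t r f g"
  have "(\<Sum>p<r. f p) = (\<Sum>p<r. (if p = 0 then real k - \<mu> else 0) + (if p = 1 then \<mu> - real k else 0))"
    unfolding f_def by (rule sum.cong) auto
  then have sf: "(\<Sum>p<r. f p) = 0" using r by (simp add: sum.distrib)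
  have "eigenvalue (laplacian (r*(k+t)) (split_adj k t r)) \<mu>"
  proof (rule eigenvalueI_fun[OF laplacian_carrier, of "r*k"])
    show "r*k < r*(k+t)" "?x (r*k) \<noteq> 0" using r t k by (simp_all add: split_block_vec_def g_def)
    fix i assume i: "i < r*(k+t)"
    show "(\<Sum>j<r*(k+t). laplacian (r*(k+t)) (split_adj k t r) $$ (i,j) * ?x j) = \<mu> * ?x i"
    proof (cases "i < r*k")
      case True
      then show ?thesis unfolding split_laplacian_block_vec_clique[OF k t True] sf using quad
        by (auto simp: f_def g_def split_block_vec_def power2_eq_square algebra_simps)
    next
      case False
      then have ge: "r*k \<le> i" by simp
      show ?thesis unfolding split_laplacian_block_vec_independent[OF k t ge i] using False
        by (auto simp: f_def g_def split_block_vec_def algebra_simps)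
    qed
  qed
  then show ?thesis using \<mu> that by blast
qed

section \<open>The spectrum for one part\<close>

lemma sum_lessThan_add_split:
  fixes x :: "nat \<Rightarrow> real"
  shows "(\<Sum>j<k+t. x j) = (\<Sum>j<k. x j) + (\<Sum>j\<in>{k..<k+t}. x j)"
  by (metis atLeast0LessThan le_add1 sum.atLeastLessThan_concat zero_le)

lemma split1_laplacian_clique_row:
  fixes x :: "nat \<Rightarrow> real"
  assumes k: "k > 0" and t: "t > 0" and u: "u < k"
  shows "(\<Sum>j<k+t. laplacian (k+t) (split_adj k t 1) $$ (u,j) * x j)
     = (real k + real t) * x u - (\<Sum>j<k+t. x j)"
  using split_laplacian_clique_row[of k t u 1 x] assms
  by (simp add: sum_lessThan_add_split[of x k t])

lemma split1_laplacian_independent_row: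
  fixes x :: "nat \<Rightarrow> real"
  assumes k: "k > 0" and t: "t > 0" and u1: "k \<le> u" and u2: "u < k+t"
  shows "(\<Sum>j<k+t. laplacian (k+t) (split_adj k t 1) $$ (u,j) * x j)
     = real k * x u - (\<Sum>j<k. x j)"
proof -
  have "(u - k) div t = 0" using u1 u2 by simp
  then show ?thesis
    using split_laplacian_independent_row[of k t 1 u x] assms by (simp add: atLeast0LessThan)
qed

text \<open>Off \<open>{k, k + t}\<close> the eigen-equations force \<open>x\<close> to be constant, \<open>c\<^sub>1\<close> on the clique and
  \<open>c\<^sub>2\<close> on the independent set, and eliminating \<open>c\<^sub>2\<close> leaves \<open>c\<^sub>1 \<mu> (\<mu> - k - t) = 0\<close>.\<close>
lemma split1_laplacian_eigenvalues:
  fixes x :: "nat \<Rightarrow> real"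
  assumes k: "k > 0" and t: "t > 0" and nz: "i0 < k+t" "x i0 \<noteq> 0"
    and eq: "\<And>i. i < k+t \<Longrightarrow> (\<Sum>j<k+t. laplacian (k+t) (split_adj k t 1) $$ (i,j) * x j) = \<mu> * x i"
  shows "\<mu> = 0 \<or> \<mu> = real k \<or> \<mu> = real k + real t"
proof (rule ccontr)
  assume "\<not> ?thesis"
  then have m0: "\<mu> \<noteq> 0" and mk: "real k - \<mu> \<noteq> 0" and mn: "real k + real t - \<mu> \<noteq> 0" by auto
  define T where "T = (\<Sum>j<k+t. x j)"
  define \<sigma> where "\<sigma> = (\<Sum>j<k. x j)"
  define c1 where "c1 = T / (real k + real t - \<mu>)"
  define c2 where "c2 = \<sigma> / (real k - \<mu>)"
  have xS: "x u = c1" if u: "u < k" for u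
  proof -
    have "(real k + real t) * x u - T = \<mu> * x u"
      using eq[of u] split1_laplacian_clique_row[OF k t u, of x] u unfolding T_def by simp
    then show ?thesis unfolding c1_def using mn by (simp add: field_simps)
  qed
  have xA: "x u = c2" if u: "k \<le> u" "u < k+t" for u
  proof -
    have "real k * x u - \<sigma> = \<mu> * x u"
      using eq[of u] split1_laplacian_independent_row[OF k t u, of x] u unfolding \<sigma>_def by simp
    then show ?thesis unfolding c2_def using mk by (simp add: field_simps)
  qed
  have s1: "\<sigma> = real k * c1" unfolding \<sigma>_def using xS by simp
  have "(\<Sum>j\<in>{k..<k+t}. x j) = real t * c2" by (rule sum_interval_const) (use xA in auto)
  then have "T = real k * c1 + real t * c2"
    unfolding T_def sum_lessThan_add_split s1[unfolded \<sigma>_def] by simp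
  then have e1: "(real k + real t - \<mu>) * c1 = real k * c1 + real t * c2"
    unfolding c1_def using mn by simp
  have e2: "(real k - \<mu>) * c2 = real k * c1" unfolding c2_def using s1 mk by simp
  have e1': "real t * c2 = (real t - \<mu>) * c1" using e1 by (simp add: algebra_simps)
  have "c1 * (\<mu> * (\<mu> - real k - real t)) = (real k - \<mu>) * ((real t - \<mu>) * c1) - real t * (real k * c1)"
    by (simp add: algebra_simps)
  also have "\<dots> = (real k - \<mu>) * (real t * c2) - real t * (real k * c1)" by (simp only: e1')
  also have "\<dots> = real t * ((real k - \<mu>) * c2 - real k * c1)" by (simp add: algebra_simps)
  also have "\<dots> = 0" using e2 by simp
  finally have "c1 = 0" using m0 mn by auto
  moreover then have "c2 = 0" using e2 mk by simp
  ultimately show False using xS xA nz by (cases "i0 < k") auto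
qed

lemma split1_laplacian_eigenvalue_k:
  assumes k: "k > 0" and t: "t \<ge> 2"
  shows "eigenvalue (laplacian (k+t) (split_adj k t 1)) (real k)"
proof -
  define x :: "nat \<Rightarrow> real" where "x j = (if j = k then 1 else if j = k+1 then -1 else 0)" for j
  have "(\<Sum>j<k+t. x j) = (\<Sum>j<k+t. (if j = k then 1 else 0) + (if j = k+1 then -1 else 0))"
    by (rule sum.cong) (auto simp: x_def)
  then have T: "(\<Sum>j<k+t. x j) = 0" using t by (simp add: sum.distrib)
  have sg: "(\<Sum>j<k. x j) = 0" by (rule sum.neutral) (auto simp: x_def)
  show ?thesis
  proof (rule eigenvalueI_fun[OF laplacian_carrier, of k])
    show "k < k+t" "x k \<noteq> 0" using t by (auto simp: x_def)
    fix i assume i: "i < k+t"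
    show "(\<Sum>j<k+t. laplacian (k+t) (split_adj k t 1) $$ (i,j) * x j) = real k * x i"
    proof (cases "i < k")
      case True
      then show ?thesis using split1_laplacian_clique_row[OF k _ True, of t x] T t by (simp add: x_def)
    next
      case False
      then show ?thesis using split1_laplacian_independent_row[OF k _ _ i, of x] sg t by simp
    qed
  qed
qed

lemma split1_laplacian_kernel:
  fixes x :: "nat \<Rightarrow> real"
  assumes k: "k > 0" and t: "t > 0" and x0: "x 0 = 0"
    and eq: "\<And>i. i < k+t \<Longrightarrow> (\<Sum>j<k+t. laplacian (k+t) (split_adj k t 1) $$ (i,j) * x j) = c"
  shows "\<forall>i<k+t. x i = 0"
proof -
  define T where "T = (\<Sum>j<k+t. x j)"
  have S: "(real k + real t) * x u - T = c" if u: "u < k" for u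
    using eq[of u] split1_laplacian_clique_row[OF k t u, of x] u unfolding T_def by simp
  then have cT: "c = - T" using k x0 by fastforce
  have xS: "x u = 0" if u: "u < k" for u
    using S[OF u] cT k by simp
  then have sig: "(\<Sum>j<k. x j) = 0" by simp
  have xA: "x u = - T / real k" if u: "k \<le> u" "u < k+t" for u
    using eq[of u] split1_laplacian_independent_row[OF k t u, of x] u sig cT k
    by (simp add: field_simps)
  have "(\<Sum>j\<in>{k..<k+t}. x j) = real t * (- T / real k)" by (rule sum_interval_const) (use xA in auto)
  then have "T * (real k + real t) = 0"
    using sig k unfolding T_def sum_lessThan_add_split by (simp add: field_simps)
  then have "T = 0" using k by simp
  then show ?thesis using xS xA by (metis div_0 minus_zero not_le)
qed

lemma split1_order_zero_char_poly:
  assumes k: "k > 0" and t: "t > 0"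
  shows "order 0 (char_poly (laplacian (k+t) (split_adj k t 1))) = 1"
  by (rule order_zero_char_poly_eq_1[OF laplacian_carrier])
    (use k laplacian_row_sum split_adj_irrefl split1_laplacian_kernel[OF k t] in auto)

section \<open>Algebraic connectivity\<close>

lemma sorted_nth_1_eq:
  fixes xs :: "real list"
  assumes so: "sorted xs" and c0: "count (mset xs) 0 = 1" and kin: "\<kappa> \<in> set xs" and kp: "\<kappa> > 0"
    and al: "\<forall>y\<in>set xs. y = 0 \<or> y \<ge> \<kappa>"
  shows "xs ! 1 = \<kappa>"
proof (cases xs)
  case (Cons a ys)
  have z: "0 \<in> set xs" using c0 by (metis count_eq_zero_iff set_mset_mset zero_neq_one)
  have a_le: "\<forall>y\<in>set ys. a \<le> y" and soy: "sorted ys" using so Cons by auto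
  then have "a \<le> 0" using z Cons by auto
  then have a0: "a = 0" using al Cons kp by force
  then have "count (mset ys) 0 = 0" using c0 Cons by simp
  then have z2: "0 \<notin> set ys" by (metis count_eq_zero_iff set_mset_mset)
  have "\<kappa> \<in> set ys" using kin Cons a0 kp by auto
  then obtain b zs where ys: "ys = b # zs" by (cases ys) auto
  have "b \<le> \<kappa>" using soy \<open>\<kappa> \<in> set ys\<close> ys by auto
  moreover have "b \<ge> \<kappa>" using al Cons ys z2 by auto
  ultimately show ?thesis using Cons ys by simp
qed (use kin in simp)

lemma sorted_nth_1_le:
  fixes xs :: "real list"
  assumes so: "sorted xs" and z: "0 \<in> set xs" and m: "\<mu> \<in> set xs" and mp: "\<mu> > 0"
  shows "xs ! 1 \<le> \<mu>"
proof (cases xs)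
  case (Cons a ys)
  have "\<exists>w\<in>set ys. w \<le> \<mu>"
  proof (rule ccontr)
    assume "\<not> ?thesis"
    then have "0 = a" "\<mu> = a" using z m mp Cons by force+
    then show False using mp by simp
  qed
  then obtain w b zs where w: "w \<in> set ys" "w \<le> \<mu>" and ys: "ys = b # zs"
    by (metis list.set_cases)
  then have "b \<le> w" using so Cons by auto
  then show ?thesis using Cons ys w by simp
qed (use z in simp)

lemma algebraic_connectivity_le_eigenvalue:
  assumes "0 < n" and "\<And>v. \<not> adj v v" and "eigenvalue (laplacian n adj) \<mu>" and "\<mu> > 0"
  shows "algebraic_connectivity n adj \<le> \<mu>"
proof -
  let ?xs = "laplacian_eigenvalues n adj"
  have "sorted ?xs" by (simp add: laplacian_eigenvalues_def)
  moreover have "0 \<in> set ?xs" "\<mu> \<in> set ?xs"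
    using assms laplacian_eigenvalue_zero unfolding laplacian_eigenvalues_set by auto
  ultimately show ?thesis
    unfolding algebraic_connectivity_def using sorted_nth_1_le \<open>\<mu> > 0\<close> by blast
qed

lemma algebraic_connectivity_eqI:
  assumes "order 0 (char_poly (laplacian n adj)) = 1"
    and "eigenvalue (laplacian n adj) \<kappa>" and "\<kappa> > 0"
    and "\<And>\<mu>. eigenvalue (laplacian n adj) \<mu> \<Longrightarrow> \<mu> = 0 \<or> \<kappa> \<le> \<mu>"
  shows "algebraic_connectivity n adj = \<kappa>"
proof -
  let ?xs = "laplacian_eigenvalues n adj"
  have "char_poly (laplacian n adj) \<noteq> 0"
    using degree_monic_char_poly[OF laplacian_carrier[of n adj]] by auto
  then have "count (mset ?xs) 0 = 1" using assms(1) by (simp add: laplacian_eigenvalues_def)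
  moreover have "sorted ?xs" by (simp add: laplacian_eigenvalues_def)
  moreover have "\<kappa> \<in> set ?xs" using assms(2) by (simp add: laplacian_eigenvalues_set)
  moreover have "\<forall>y\<in>set ?xs. y = 0 \<or> y \<ge> \<kappa>" using assms(4) by (simp add: laplacian_eigenvalues_set)
  ultimately show ?thesis
    unfolding algebraic_connectivity_def using sorted_nth_1_eq \<open>\<kappa> > 0\<close> by blast
qed

lemma algebraic_connectivity_split1:
  assumes k: "k > 0" and t: "t \<ge> 2"
  shows "algebraic_connectivity (k+t) (split_adj k t 1) = real k"
proof (rule algebraic_connectivity_eqI)
  have t0: "t > 0" using t by simp
  show "order 0 (char_poly (laplacian (k+t) (split_adj k t 1))) = 1"
    by (rule split1_order_zero_char_poly[OF k t0])
  show "eigenvalue (laplacian (k+t) (split_adj k t 1)) (real k)"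
    by (rule split1_laplacian_eigenvalue_k[OF k t])
  fix \<mu> assume ev: "eigenvalue (laplacian (k+t) (split_adj k t 1)) \<mu>"
  obtain i0 x where "i0 < k+t" "x i0 \<noteq> 0"
    "\<And>i. i < k+t \<Longrightarrow> (\<Sum>j<k+t. laplacian (k+t) (split_adj k t 1) $$ (i,j) * x j) = \<mu> * x i"
    by (rule eigenvalueE_fun[OF laplacian_carrier ev]) blast
  then have "\<mu> = 0 \<or> \<mu> = real k \<or> \<mu> = real k + real t" by (rule split1_laplacian_eigenvalues[OF k t0])
  then show "\<mu> = 0 \<or> real k \<le> \<mu>" by auto
qed (use k in simp)

lemma algebraic_connectivity_split_less:
  assumes k: "k > 0" and t: "t > 0" and r: "r \<ge> 2"
  shows "algebraic_connectivity (r*(k+t)) (split_adj k t r) < real k"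
proof -
  obtain \<mu> where \<mu>: "0 < \<mu>" "\<mu> < real k" "eigenvalue (laplacian (r*(k+t)) (split_adj k t r)) \<mu>"
    by (rule split_laplacian_eigenvalue_below_k[OF k t r])
  have "algebraic_connectivity (r*(k+t)) (split_adj k t r) \<le> \<mu>"
    by (rule algebraic_connectivity_le_eigenvalue) (use \<mu> k r split_adj_irrefl in auto)
  with \<mu> show ?thesis by simp
qed

theorem mainTheorem8:
  fixes k t r :: nat
  assumes "k \<ge> 1" and "t \<ge> 1" and "r \<ge> 1"
  shows "(r = 1 \<and> t \<ge> 2 \<longrightarrow>
            algebraic_connectivity (split_n k t r) (split_adj k t r)
              = real (vertex_connectivity (split_n k t r) (split_adj k t r)))
       \<and> (r \<ge> 2 \<longrightarrow>
            algebraic_connectivity (split_n k t r) (split_adj k t r)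
              \<noteq> real (vertex_connectivity (split_n k t r) (split_adj k t r)))"
proof (intro conjI impI)
  have k: "k > 0" and t: "t > 0" using assms by auto
  assume "r = 1 \<and> t \<ge> 2"
  then have "r = 1" "t \<ge> 2" by auto
  then show "algebraic_connectivity (split_n k t r) (split_adj k t r)
      = real (vertex_connectivity (split_n k t r) (split_adj k t r))"
    using algebraic_connectivity_split1[OF k] vertex_connectivity_split[OF k t, of 1]
    unfolding split_n_def by simp
next
  have k: "k > 0" and t: "t > 0" using assms by auto
  assume r: "r \<ge> 2"
  then show "algebraic_connectivity (split_n k t r) (split_adj k t r)
      \<noteq> real (vertex_connectivity (split_n k t r) (split_adj k t r))"
    using algebraic_connectivity_split_less[OF k t r] vertex_connectivity_split[OF k t]
    unfolding split_n_def by simp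
qed

end
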